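(* Let $G_1=(V_1,E_1)$ and $G_2=(V_2,E_2)$ be bispanning graphs on disjoint vertex and edge sets, let $d_1\in E_1$ have ends $x_1,y_1$ and $d_2\in E_2$ have ends $x_2,y_2$, and let $\sigma:\{x_1,y_1\}\to\{x_2,y_2\}$ be a bijection. Then the graph obtained from the disjoint union of $G_1$ and $G_2$ by identifying $x_1$ with $\sigma(x_1)$ and $y_1$ with $\sigma(y_1)$ and then deleting $d_1$ and $d_2$ (the $2$-clique sum with no remaining clique edges) is bispanning.
   Context: Graphs are finite, undirected, may have parallel edges, no loops. A spanning tree of $G=(V,E)$ is $T\subseteq E$ with $(V,T)$ connected and acyclic; $G$ is bispanning if $E$ is the union of two disjoint spanning trees. *)

theory Defs
  imports Main
begin

definition multigraph :: "'v set \<Rightarrow> 'e set \<Rightarrow> ('e \<Rightarrow> 'v set) \<Rightarrow> bool" where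
  "multigraph V E ends \<longleftrightarrow> finite V \<and> finite E \<and>
     (\<forall>e\<in>E. ends e \<subseteq> V \<and> card (ends e) = 2)"

inductive walk :: "('e \<Rightarrow> 'v set) \<Rightarrow> 'e set \<Rightarrow> 'v \<Rightarrow> 'e list \<Rightarrow> 'v \<Rightarrow> bool"
  for ends F where
  walk_Nil: "walk ends F u [] u"
| walk_Cons: "\<lbrakk>e \<in> F; ends e = {u, w}; walk ends F w es v\<rbrakk> \<Longrightarrow> walk ends F u (e # es) v"

definition connected_on :: "'v set \<Rightarrow> 'e set \<Rightarrow> ('e \<Rightarrow> 'v set) \<Rightarrow> bool" where
  "connected_on V F ends \<longleftrightarrow> (\<forall>u\<in>V. \<forall>v\<in>V. \<exists>es. walk ends F u es v)"

definition acyclic_edges :: "'e set \<Rightarrow> ('e \<Rightarrow> 'v set) \<Rightarrow> bool" where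
  "acyclic_edges F ends \<longleftrightarrow> \<not> (\<exists>u es. es \<noteq> [] \<and> distinct es \<and> walk ends F u es u)"

definition spanning_tree :: "'v set \<Rightarrow> 'e set \<Rightarrow> ('e \<Rightarrow> 'v set) \<Rightarrow> 'e set \<Rightarrow> bool" where
  "spanning_tree V E ends T \<longleftrightarrow> T \<subseteq> E \<and> connected_on V T ends \<and> acyclic_edges T ends"

definition bispanning :: "'v set \<Rightarrow> 'e set \<Rightarrow> ('e \<Rightarrow> 'v set) \<Rightarrow> bool" where
  "bispanning V E ends \<longleftrightarrow> multigraph V E ends \<and>
     (\<exists>T1 T2. T1 \<inter> T2 = {} \<and> T1 \<union> T2 = E \<and>
        spanning_tree V E ends T1 \<and> spanning_tree V E ends T2)"

text \<open>2-clique sum: G2's vertex sigma x1 is identified with x1 and sigma y1 with y1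
  (the merged vertices keep the names x1, y1), then d1 and d2 are deleted.\<close>
definition glue_map :: "'v \<Rightarrow> 'v \<Rightarrow> ('v \<Rightarrow> 'v) \<Rightarrow> 'v \<Rightarrow> 'v" where
  "glue_map x1 y1 \<sigma> v = (if v = \<sigma> x1 then x1 else if v = \<sigma> y1 then y1 else v)"

definition sum_V :: "'v set \<Rightarrow> 'v set \<Rightarrow> 'v \<Rightarrow> 'v \<Rightarrow> ('v \<Rightarrow> 'v) \<Rightarrow> 'v set" where
  "sum_V V1 V2 x1 y1 \<sigma> = V1 \<union> glue_map x1 y1 \<sigma> ` V2"

definition sum_E :: "'e set \<Rightarrow> 'e set \<Rightarrow> 'e \<Rightarrow> 'e \<Rightarrow> 'e set" where
  "sum_E E1 E2 d1 d2 = (E1 - {d1}) \<union> (E2 - {d2})"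

definition sum_ends :: "'e set \<Rightarrow> ('e \<Rightarrow> 'v set) \<Rightarrow> ('e \<Rightarrow> 'v set)
    \<Rightarrow> 'v \<Rightarrow> 'v \<Rightarrow> ('v \<Rightarrow> 'v) \<Rightarrow> 'e \<Rightarrow> 'v set" where
  "sum_ends E1 ends1 ends2 x1 y1 \<sigma> e =
     (if e \<in> E1 then ends1 e else glue_map x1 y1 \<sigma> ` ends2 e)"

end

theory Submission
  imports Defs
begin

text \<open>Take tree decompositions T1, T2 of G1 and S1, S2 of G2 with d1 in T1 and d2 in S1. Then
  (T1 - d1) + S2 is a spanning tree of the 2-sum: it is connected because S2 joins the two glued
  vertices and so takes over the role of d1, and it is acyclic because any cycle can be retracted
  onto one of the two sides. Exchanging the roles of G1 and G2, T2 + (S1 - d2) is the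
  complementary spanning tree.\<close>

abbreviation reachable :: "('e \<Rightarrow> 'v set) \<Rightarrow> 'e set \<Rightarrow> 'v \<Rightarrow> 'v \<Rightarrow> bool" where
  "reachable ends F u v \<equiv> \<exists>es. walk ends F u es v"

inductive_cases walk_ConsE: "walk ends F u (e # es) v"

lemma walk_append:
  "walk ends F u xs m \<Longrightarrow> walk ends F m ys v \<Longrightarrow> walk ends F u (xs @ ys) v"
  by (induction rule: walk.induct) (auto intro: walk.intros)

lemma walk_append_split:
  "walk ends F u (xs @ ys) v \<Longrightarrow> \<exists>m. walk ends F u xs m \<and> walk ends F m ys v"
proof (induction xs arbitrary: u)
  case Nil
  then show ?case by (auto intro: walk.walk_Nil)
next
  case (Cons x xs)
  then obtain w where "x \<in> F" "ends x = {u, w}" "walk ends F w (xs @ ys) v"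
    by (auto elim: walk_ConsE)
  with Cons.IH show ?case by (blast intro: walk.intros)
qed

lemma walk_singleton: "e \<in> F \<Longrightarrow> ends e = {a, b} \<Longrightarrow> walk ends F a [e] b"
  by (auto intro: walk.intros)

lemma walk_rev: "walk ends F u es v \<Longrightarrow> walk ends F v (rev es) u"
proof (induction rule: walk.induct)
  case (walk_Nil u)
  then show ?case by (simp add: walk.walk_Nil)
next
  case (walk_Cons e u w es v)
  then have "walk ends F w [e] u" by (auto intro: walk_singleton simp: insert_commute)
  with walk_Cons.IH show ?case using walk_append by fastforce
qed

lemma walk_set_subset: "walk ends F u es v \<Longrightarrow> set es \<subseteq> F"
  by (induction rule: walk.induct) auto

lemma walk_subset: "walk ends F u es v \<Longrightarrow> set es \<subseteq> F' \<Longrightarrow> walk ends F' u es v"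
  by (induction rule: walk.induct) (simp_all add: walk.intros)

lemma walk_mono:
  assumes "walk ends F u es v" "F \<subseteq> F'"
  shows "walk ends F' u es v"
  using walk_subset[OF assms(1)] walk_set_subset[OF assms(1)] assms(2) by blast

lemma walk_distinct_subwalk:
  "walk ends F u es v \<Longrightarrow> \<exists>es'. set es' \<subseteq> set es \<and> distinct es' \<and> walk ends F u es' v"
proof (induction "length es" arbitrary: es rule: less_induct)
  case less
  show ?case
  proof (cases "distinct es")
    case True
    with less.prems show ?thesis by blast
  next
    case False
    then obtain xs ys zs y where es: "es = xs @ [y] @ ys @ [y] @ zs"
      using not_distinct_decomp by blast
    from less.prems es obtain m where xs: "walk ends F u xs m"
      and rest: "walk ends F m (y # ys @ y # zs) v" using walk_append_split by fastforce
    from rest obtain n where y: "ends y = {m, n}" and yF: "y \<in> F"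
      and "walk ends F n (ys @ y # zs) v" by (auto elim: walk_ConsE)
    from walk_append_split[OF this(3)] obtain m' where "walk ends F m' (y # zs) v" by blast
    then obtain n' where y': "ends y = {m', n'}" and zs: "walk ends F n' zs v"
      by (auto elim: walk_ConsE)
    \<comment> \<open>The second copy of y is traversed in one of its two directions; cut out the loop.\<close>
    have "\<exists>es2. length es2 < length es \<and> set es2 \<subseteq> set es \<and> walk ends F u es2 v"
    proof (cases "m = m'")
      case True
      with y' zs yF have "walk ends F m (y # zs) v" by (simp add: walk.walk_Cons)
      with xs have "walk ends F u (xs @ y # zs) v" by (rule walk_append)
      then show ?thesis using es by (intro exI[of _ "xs @ y # zs"]) auto
    next
      case False
      with y y' have "m = n'" by (auto simp: doubleton_eq_iff)
      with xs zs have "walk ends F u (xs @ zs) v" by (simp add: walk_append)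
      then show ?thesis using es by (intro exI[of _ "xs @ zs"]) auto
    qed
    then obtain es2 where "length es2 < length es" "set es2 \<subseteq> set es" "walk ends F u es2 v"
      by blast
    with less.hyps obtain es' where "set es' \<subseteq> set es2" "distinct es'" "walk ends F u es' v"
      by blast
    with \<open>set es2 \<subseteq> set es\<close> show ?thesis by blast
  qed
qed

lemma reachable_refl: "reachable ends F u u"
  by (blast intro: walk.walk_Nil)

lemma reachable_trans: "reachable ends F u w \<Longrightarrow> reachable ends F w v \<Longrightarrow> reachable ends F u v"
  by (blast intro: walk_append)

lemma reachable_sym: "reachable ends F u v \<Longrightarrow> reachable ends F v u"
  by (blast intro: walk_rev)

lemma reachable_edge: "e \<in> F \<Longrightarrow> ends e = {a, b} \<Longrightarrow> reachable ends F a b"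
  by (blast intro: walk_singleton)

lemma reachable_mono: "reachable ends F u v \<Longrightarrow> F \<subseteq> F' \<Longrightarrow> reachable ends F' u v"
  by (blast intro: walk_mono)

lemma reachable_doubleton:
  "reachable ends F c d \<Longrightarrow> {a, b} = {c, d} \<Longrightarrow> reachable ends F a b"
  by (auto simp: doubleton_eq_iff intro: reachable_sym)

lemma reachable_between_ends:
  assumes "e \<in> F" "ends e = {p, q}" "a \<in> {p, q}" "b \<in> {p, q}"
  shows "reachable ends F a b"
  using assms by (auto intro: reachable_refl reachable_edge reachable_doubleton)

lemma reachable_edge_iff:
  "e \<in> F \<Longrightarrow> ends e = {a, b} \<Longrightarrow> reachable ends F x a \<longleftrightarrow> reachable ends F x b"
  using reachable_edge[of e F ends a b] reachable_edge[of e F ends b a]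
  by (auto simp: insert_commute intro: reachable_trans)

lemma reachable_map:
  assumes "reachable ends F u v"
    and "\<And>e a b. e \<in> F \<Longrightarrow> ends e = {a, b} \<Longrightarrow> reachable ends' F' (p a) (p b)"
  shows "reachable ends' F' (p u) (p v)"
proof -
  from assms(1) obtain es where "walk ends F u es v" by blast
  then show ?thesis
    by (induction rule: walk.induct)
      (use assms(2) in \<open>blast intro: reachable_refl reachable_trans\<close>)+
qed

lemma reachable_image:
  assumes "reachable ends F u v" "\<And>e. e \<in> F \<Longrightarrow> ends' e = f ` ends e"
  shows "reachable ends' F (f u) (f v)"
  using assms(1) by (rule reachable_map) (simp add: assms(2) reachable_edge)

lemma connected_onI_root:
  "(\<And>v. v \<in> V \<Longrightarrow> reachable ends F r v) \<Longrightarrow> connected_on V F ends"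
  unfolding connected_on_def by (blast intro: reachable_sym reachable_trans)

lemma acyclic_edges_not_reachable_Diff:
  assumes "acyclic_edges T ends" "e \<in> T" "ends e = {a, b}"
  shows "\<not> reachable ends (T - {e}) a b"
proof
  assume "reachable ends (T - {e}) a b"
  then obtain es0 where "walk ends (T - {e}) a es0 b" by blast
  from walk_distinct_subwalk[OF this]
  obtain es where "distinct es" and w: "walk ends (T - {e}) a es b" by blast
  have "set es \<subseteq> T - {e}" using walk_set_subset[OF w] .
  with w have "walk ends T a es b" by (blast intro: walk_subset)
  with assms(2,3) have "walk ends T b (e # es) b" by (auto intro: walk.walk_Cons simp: insert_commute)
  moreover have "distinct (e # es)" using \<open>set es \<subseteq> T - {e}\<close> \<open>distinct es\<close> by auto
  ultimately show False using assms(1) unfolding acyclic_edges_def by blast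
qed

lemma acyclic_edgesI:
  assumes "\<And>e a b. e \<in> T \<Longrightarrow> ends e = {a, b} \<Longrightarrow> \<not> reachable ends (T - {e}) a b"
  shows "acyclic_edges T ends"
  unfolding acyclic_edges_def
proof (intro notI, elim exE conjE)
  fix u es assume "es \<noteq> []" and d: "distinct es" and w: "walk ends T u es u"
  then obtain e es' where es: "es = e # es'" by (cases es) auto
  with w obtain w' where e: "e \<in> T" "ends e = {u, w'}" and w': "walk ends T w' es' u"
    by (auto elim: walk_ConsE)
  have "set es' \<subseteq> T - {e}" using walk_set_subset[OF w'] d es by auto
  with w' have "reachable ends (T - {e}) w' u" by (blast intro: walk_subset)
  with assms e show False by (blast intro: reachable_sym)
qed

lemma multigraph_edge_image:
  assumes "multigraph V E ends" "e \<in> E" "f ` ends e = {a, b}"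
  obtains c d where "ends e = {c, d}" "c \<in> V" "d \<in> V" "{a, b} = {f c, f d}"
proof -
  obtain c d where cd: "ends e = {c, d}"
    using assms(1,2) unfolding multigraph_def by (metis card_2_iff)
  with assms show thesis using that unfolding multigraph_def by auto
qed

lemma doubleton_retract:
  "{a, b} = {f c, f d} \<Longrightarrow> P (f c) = c \<Longrightarrow> P (f d) = d \<Longrightarrow> {P a, P b} = {c, d}"
  by (auto simp: doubleton_eq_iff)

lemma bispanning_obtain_trees:
  assumes "bispanning V E ends" "d \<in> E"
  obtains T S where "T \<inter> S = {}" "T \<union> S = E" "d \<in> T"
    "spanning_tree V E ends T" "spanning_tree V E ends S"
proof -
  from assms(1) obtain T S where "T \<inter> S = {}" "T \<union> S = E"
    "spanning_tree V E ends T" "spanning_tree V E ends S"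
    unfolding bispanning_def by blast
  with assms(2) that show thesis
    by (cases "d \<in> T") (blast, metis Int_commute Un_commute Un_iff)
qed

text \<open>Both sides are embedded into the vertex set V of the 2-sum, by f1 and f2, so that the
  construction is symmetric in G1 and G2.\<close>

locale two_sum =
  fixes V1 :: "'a set" and E1 :: "'e set" and ends1 :: "'e \<Rightarrow> 'a set"
    and d1 :: 'e and x1 y1 :: 'a and f1 :: "'a \<Rightarrow> 'c"
    and V2 :: "'b set" and E2 :: "'e set" and ends2 :: "'e \<Rightarrow> 'b set"
    and d2 :: 'e and x2 y2 :: 'b and f2 :: "'b \<Rightarrow> 'c"
    and V :: "'c set" and ends :: "'e \<Rightarrow> 'c set"
  assumes multigraph1: "multigraph V1 E1 ends1" and multigraph2: "multigraph V2 E2 ends2"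
    and disjoint_edges: "E1 \<inter> E2 = {}"
    and d1_in: "d1 \<in> E1" and ends_d1: "ends1 d1 = {x1, y1}"
    and d2_in: "d2 \<in> E2" and ends_d2: "ends2 d2 = {x2, y2}"
    and inj1: "inj_on f1 V1" and inj2: "inj_on f2 V2"
    and glue_x: "f1 x1 = f2 x2" and glue_y: "f1 y1 = f2 y2"
    and overlap: "f1 ` V1 \<inter> f2 ` V2 \<subseteq> {f1 x1, f1 y1}"
    and V_eq: "V = f1 ` V1 \<union> f2 ` V2"
    and ends_E1: "\<And>e. e \<in> E1 \<Longrightarrow> ends e = f1 ` ends1 e"
    and ends_E2: "\<And>e. e \<in> E2 \<Longrightarrow> ends e = f2 ` ends2 e"

lemma two_sum_swap:
  "two_sum V1 E1 ends1 d1 x1 y1 f1 V2 E2 ends2 d2 x2 y2 f2 V ends \<Longrightarrow>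
   two_sum V2 E2 ends2 d2 x2 y2 f2 V1 E1 ends1 d1 x1 y1 f1 V ends"
  unfolding two_sum_def by (auto simp: Int_commute Un_commute)

context two_sum
begin

lemma ends_d1_in: "x1 \<in> V1" "y1 \<in> V1"
  using multigraph1 d1_in ends_d1 unfolding multigraph_def by auto

lemma ends_d2_in: "x2 \<in> V2" "y2 \<in> V2"
  using multigraph2 d2_in ends_d2 unfolding multigraph_def by auto

lemma multigraph_sum: "multigraph V ((E1 - {d1}) \<union> (E2 - {d2})) ends"
proof -
  have "ends e \<subseteq> V \<and> card (ends e) = 2" if "e \<in> E1 \<union> E2" for e
  proof (cases "e \<in> E1")
    case True
    with multigraph1 have "ends1 e \<subseteq> V1" "card (ends1 e) = 2" unfolding multigraph_def by auto
    with True show ?thesis using ends_E1 V_eq inj1 by (auto simp: card_image inj_on_subset)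
  next
    case False
    with that multigraph2 have "e \<in> E2" "ends2 e \<subseteq> V2" "card (ends2 e) = 2"
      unfolding multigraph_def by auto
    then show ?thesis using ends_E2 V_eq inj2 by (auto simp: card_image inj_on_subset)
  qed
  moreover have "finite V" "finite E1" "finite E2"
    using multigraph1 multigraph2 V_eq unfolding multigraph_def by auto
  ultimately show ?thesis unfolding multigraph_def by blast
qed

lemma sum_edge_first:
  assumes "e \<in> E1" "ends e = {a, b}"
  obtains c d where "ends1 e = {c, d}" "c \<in> V1" "d \<in> V1" "{a, b} = {f1 c, f1 d}"
  using multigraph_edge_image[OF multigraph1 assms(1)] assms ends_E1 by metis

lemma sum_edge_second:
  assumes "e \<in> E2" "ends e = {a, b}"
  obtains c d where "ends2 e = {c, d}" "c \<in> V2" "d \<in> V2" "{a, b} = {f2 c, f2 d}"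
  using multigraph_edge_image[OF multigraph2 assms(1)] assms ends_E2 by metis

lemma connected_sum_tree:
  assumes T: "spanning_tree V1 E1 ends1 T" "d1 \<in> T" and S: "spanning_tree V2 E2 ends2 S"
  shows "connected_on V ((T - {d1}) \<union> S) ends"
proof (rule connected_onI_root[where r = "f1 x1"])
  let ?F = "(T - {d1}) \<union> S"
  have through_S: "reachable ends ?F (f2 a) (f2 b)" if "a \<in> V2" "b \<in> V2" for a b
  proof -
    from S that have "reachable ends2 S a b" unfolding spanning_tree_def connected_on_def by blast
    then have "reachable ends S (f2 a) (f2 b)"
      by (rule reachable_image) (use S ends_E2 in \<open>auto simp: spanning_tree_def\<close>)
    then show ?thesis by (rule reachable_mono) blast
  qed
  fix v assume "v \<in> V"
  then consider u where "u \<in> V1" "v = f1 u" | w where "w \<in> V2" "v = f2 w"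
    using V_eq by blast
  then show "reachable ends ?F (f1 x1) v"
  proof cases
    case 1
    with T ends_d1_in have "reachable ends1 T x1 u"
      unfolding spanning_tree_def connected_on_def by blast
    then have "reachable ends ?F (f1 x1) (f1 u)"
    proof (rule reachable_map)
      fix e a b assume e: "e \<in> T" "ends1 e = {a, b}"
      show "reachable ends ?F (f1 a) (f1 b)"
      proof (cases "e = d1")
        case True
        with e ends_d1 glue_x glue_y have "{f1 a, f1 b} = {f2 x2, f2 y2}"
          by (auto simp: doubleton_eq_iff)
        with through_S ends_d2_in show ?thesis by (blast intro: reachable_doubleton)
      next
        case False
        with e T ends_E1 have "e \<in> ?F" "ends e = {f1 a, f1 b}"
          unfolding spanning_tree_def by auto
        then show ?thesis by (rule reachable_edge)
      qed
    qed
    with 1 show ?thesis by simp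
  next
    case 2
    with through_S ends_d2_in glue_x show ?thesis by metis
  qed
qed

text \<open>A cycle through an edge of T - d1 is pushed into G1 by contracting the G2-side onto the
  glued pair, where d1 closes it up again.\<close>

lemma sum_tree_no_cycle_first:
  assumes T: "spanning_tree V1 E1 ends1 T" "d1 \<in> T" and S: "S \<subseteq> E2"
    and e: "e \<in> T - {d1}" "ends e = {a, b}"
  shows "\<not> reachable ends ((T - {d1}) \<union> S - {e}) a b"
proof
  assume cycle: "reachable ends ((T - {d1}) \<union> S - {e}) a b"
  have T_sub: "T \<subseteq> E1" using T unfolding spanning_tree_def by blast
  define P where "P v = (if v \<in> f1 ` V1 then inv_into V1 f1 v else x1)" for v
  have P_f1: "P (f1 u) = u" if "u \<in> V1" for u
    using that inj1 by (simp add: P_def)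
  have P_f2: "P (f2 w) \<in> {x1, y1}" if "w \<in> V2" for w
  proof (cases "f2 w \<in> f1 ` V1")
    case True
    with that overlap have "f2 w \<in> {f1 x1, f1 y1}" by blast
    then show ?thesis using P_f1 ends_d1_in by auto
  qed (simp add: P_def)
  have retract: "reachable ends1 (T - {e}) (P a) (P b)"
    using cycle
  proof (rule reachable_map)
    fix e' a' b' assume e': "e' \<in> (T - {d1}) \<union> S - {e}" "ends e' = {a', b'}"
    show "reachable ends1 (T - {e}) (P a') (P b')"
    proof (cases "e' \<in> E1")
      case True
      obtain c d where cd: "ends1 e' = {c, d}" "c \<in> V1" "d \<in> V1" "{a', b'} = {f1 c, f1 d}"
        using sum_edge_first[OF True e'(2)] .
      have "ends1 e' = {P a', P b'}"
        using cd(1) doubleton_retract[of a' b' f1 c d P, OF cd(4) P_f1[OF cd(2)] P_f1[OF cd(3)]]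
        by simp
      moreover have "e' \<in> T - {e}" using True e'(1) S disjoint_edges by blast
      ultimately show ?thesis by (blast intro: reachable_edge)
    next
      case False
      with e'(1) S T_sub have "e' \<in> E2" by blast
      from sum_edge_second[OF this e'(2)]
      obtain c d where cd: "ends2 e' = {c, d}" "c \<in> V2" "d \<in> V2" "{a', b'} = {f2 c, f2 d}" .
      have "P a' \<in> {x1, y1}" "P b' \<in> {x1, y1}"
        using cd(4) P_f2[OF cd(2)] P_f2[OF cd(3)] by (auto simp: doubleton_eq_iff)
      moreover have "d1 \<in> T - {e}" using T(2) e(1) by blast
      ultimately show ?thesis using ends_d1 by (intro reachable_between_ends)
    qed
  qed
  have "e \<in> T" "e \<in> E1" using e(1) T_sub by auto
  from sum_edge_first[OF this(2) e(2)]
  obtain c d where cd: "ends1 e = {c, d}" "c \<in> V1" "d \<in> V1" "{a, b} = {f1 c, f1 d}" .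
  have "{P a, P b} = {c, d}"
    by (rule doubleton_retract[of a b f1 c d P, OF cd(4) P_f1[OF cd(2)] P_f1[OF cd(3)]])
  with retract have "reachable ends1 (T - {e}) c d" by (metis reachable_doubleton)
  moreover have "acyclic_edges T ends1" using T unfolding spanning_tree_def by blast
  ultimately show False
    using acyclic_edges_not_reachable_Diff[of T ends1, OF _ \<open>e \<in> T\<close> cd(1)] by simp
qed

text \<open>A cycle through an edge of S is pushed into G2 by collapsing each of the two components of
  T - d1 onto the glued vertex it contains.\<close>

lemma sum_tree_no_cycle_second:
  assumes T: "spanning_tree V1 E1 ends1 T" "d1 \<in> T" and S: "spanning_tree V2 E2 ends2 S"
    and e: "e \<in> S" "ends e = {a, b}"
  shows "\<not> reachable ends ((T - {d1}) \<union> S - {e}) a b"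
proof
  assume cycle: "reachable ends ((T - {d1}) \<union> S - {e}) a b"
  have T_sub: "T \<subseteq> E1" and S_sub: "S \<subseteq> E2" using T S unfolding spanning_tree_def by auto
  define R where "R u \<longleftrightarrow> reachable ends1 (T - {d1}) x1 u" for u
  define P where "P v = (if v \<in> f2 ` V2 then inv_into V2 f2 v
                          else if R (inv_into V1 f1 v) then x2 else y2)" for v
  have R_x: "R x1" unfolding R_def by (rule reachable_refl)
  have "acyclic_edges T ends1" using T unfolding spanning_tree_def by blast
  then have R_y: "\<not> R y1"
    unfolding R_def using acyclic_edges_not_reachable_Diff[of T ends1, OF _ T(2) ends_d1] by simp
  have P_f2: "P (f2 w) = w" if "w \<in> V2" for w
    using that inj2 by (simp add: P_def)
  have P_f1: "P (f1 u) = (if R u then x2 else y2)" if "u \<in> V1" for u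
  proof (cases "f1 u \<in> f2 ` V2")
    case True
    with that overlap inj1 ends_d1_in have "u = x1 \<or> u = y1" by (auto dest: inj_onD)
    then show ?thesis
      using glue_x glue_y P_f2[OF ends_d2_in(1)] P_f2[OF ends_d2_in(2)] R_x R_y by auto
  next
    case False
    with that inj1 show ?thesis by (simp add: P_def)
  qed
  have retract: "reachable ends2 (S - {e}) (P a) (P b)"
    using cycle
  proof (rule reachable_map)
    fix e' a' b' assume e': "e' \<in> (T - {d1}) \<union> S - {e}" "ends e' = {a', b'}"
    show "reachable ends2 (S - {e}) (P a') (P b')"
    proof (cases "e' \<in> E1")
      case True
      obtain c d where cd: "ends1 e' = {c, d}" "c \<in> V1" "d \<in> V1" "{a', b'} = {f1 c, f1 d}"
        using sum_edge_first[OF True e'(2)] .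
      have "e' \<in> T - {d1}" using True e'(1) S_sub disjoint_edges by blast
      then have "R c \<longleftrightarrow> R d" unfolding R_def using cd(1) by (rule reachable_edge_iff)
      then have "P a' = P b'" using cd P_f1 by (auto simp: doubleton_eq_iff)
      then show ?thesis by (simp add: reachable_refl)
    next
      case False
      with e'(1) T_sub have e'_S: "e' \<in> S - {e}" by blast
      with S_sub have "e' \<in> E2" by blast
      from sum_edge_second[OF this e'(2)]
      obtain c d where cd: "ends2 e' = {c, d}" "c \<in> V2" "d \<in> V2" "{a', b'} = {f2 c, f2 d}" .
      have "ends2 e' = {P a', P b'}"
        using cd(1) doubleton_retract[of a' b' f2 c d P, OF cd(4) P_f2[OF cd(2)] P_f2[OF cd(3)]]
        by simp
      with e'_S show ?thesis by (rule reachable_edge)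
    qed
  qed
  have "e \<in> E2" using e(1) S_sub by blast
  from sum_edge_second[OF this e(2)]
  obtain c d where cd: "ends2 e = {c, d}" "c \<in> V2" "d \<in> V2" "{a, b} = {f2 c, f2 d}" .
  have "{P a, P b} = {c, d}"
    by (rule doubleton_retract[of a b f2 c d P, OF cd(4) P_f2[OF cd(2)] P_f2[OF cd(3)]])
  with retract have "reachable ends2 (S - {e}) c d" by (metis reachable_doubleton)
  moreover have "acyclic_edges S ends2" using S unfolding spanning_tree_def by blast
  ultimately show False
    using acyclic_edges_not_reachable_Diff[of S ends2, OF _ e(1) cd(1)] by simp
qed

lemma spanning_tree_sum:
  assumes T: "spanning_tree V1 E1 ends1 T" "d1 \<in> T"
    and S: "spanning_tree V2 E2 ends2 S" "d2 \<notin> S"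
  shows "spanning_tree V ((E1 - {d1}) \<union> (E2 - {d2})) ends ((T - {d1}) \<union> S)"
proof -
  have T_sub: "T \<subseteq> E1" and S_sub: "S \<subseteq> E2" using T S unfolding spanning_tree_def by auto
  have "acyclic_edges ((T - {d1}) \<union> S) ends"
  proof (rule acyclic_edgesI)
    fix e a b assume e: "e \<in> (T - {d1}) \<union> S" and ends_e: "ends e = {a, b}"
    then consider "e \<in> T - {d1}" | "e \<in> S" by blast
    then show "\<not> reachable ends ((T - {d1}) \<union> S - {e}) a b"
    proof cases
      case 1
      from sum_tree_no_cycle_first[OF T S_sub 1 ends_e] show ?thesis .
    next
      case 2
      from sum_tree_no_cycle_second[OF T S(1) 2 ends_e] show ?thesis .
    qed
  qed
  moreover have "(T - {d1}) \<union> S \<subseteq> (E1 - {d1}) \<union> (E2 - {d2})" using T_sub S_sub S(2) by blast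
  ultimately show ?thesis
    using connected_sum_tree[OF T S(1)] unfolding spanning_tree_def by blast
qed

lemma bispanning_sum:
  assumes "bispanning V1 E1 ends1" "bispanning V2 E2 ends2"
  shows "bispanning V ((E1 - {d1}) \<union> (E2 - {d2})) ends"
proof -
  obtain A1 B1 where A1: "A1 \<inter> B1 = {}" "A1 \<union> B1 = E1" "d1 \<in> A1"
    "spanning_tree V1 E1 ends1 A1" "spanning_tree V1 E1 ends1 B1"
    using bispanning_obtain_trees[OF assms(1) d1_in] .
  obtain A2 B2 where A2: "A2 \<inter> B2 = {}" "A2 \<union> B2 = E2" "d2 \<in> A2"
    "spanning_tree V2 E2 ends2 A2" "spanning_tree V2 E2 ends2 B2"
    using bispanning_obtain_trees[OF assms(2) d2_in] .
  interpret swapped: two_sum V2 E2 ends2 d2 x2 y2 f2 V1 E1 ends1 d1 x1 y1 f1 V ends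
    by (rule two_sum_swap) (rule two_sum_axioms)
  let ?E = "(E1 - {d1}) \<union> (E2 - {d2})"
  have "d1 \<notin> B1" "d2 \<notin> B2" using A1(1,3) A2(1,3) by blast+
  have "spanning_tree V ?E ends ((A1 - {d1}) \<union> B2)"
    using spanning_tree_sum[OF A1(4,3) A2(5) \<open>d2 \<notin> B2\<close>] .
  moreover have "spanning_tree V ?E ends ((A2 - {d2}) \<union> B1)"
    using swapped.spanning_tree_sum[OF A2(4,3) A1(5) \<open>d1 \<notin> B1\<close>] by (simp add: Un_commute)
  moreover have "((A1 - {d1}) \<union> B2) \<inter> ((A2 - {d2}) \<union> B1) = {}"
    using A1(1,2) A2(1,2) disjoint_edges by blast
  moreover have "((A1 - {d1}) \<union> B2) \<union> ((A2 - {d2}) \<union> B1) = ?E"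
    using A1(1-3) A2(1-3) by blast
  ultimately show ?thesis using multigraph_sum unfolding bispanning_def by blast
qed

end

lemma two_sum_clique_sum:
  assumes multigraph1: "multigraph V1 E1 ends1" and multigraph2: "multigraph V2 E2 ends2"
    and "V1 \<inter> V2 = {}" and "E1 \<inter> E2 = {}"
    and "d1 \<in> E1" and "ends1 d1 = {x1, y1}"
    and "d2 \<in> E2" and "ends2 d2 = {x2, y2}"
    and "bij_betw \<sigma> {x1, y1} {x2, y2}"
  shows "two_sum V1 E1 ends1 d1 x1 y1 id V2 E2 ends2 d2 (\<sigma> x1) (\<sigma> y1) (glue_map x1 y1 \<sigma>)
           (sum_V V1 V2 x1 y1 \<sigma>) (sum_ends E1 ends1 ends2 x1 y1 \<sigma>)"
proof -
  let ?g = "glue_map x1 y1 \<sigma>"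
  have ends_d2: "ends2 d2 = {\<sigma> x1, \<sigma> y1}" using assms(8,9) by (simp add: bij_betw_def)
  have "x1 \<in> V1" "y1 \<in> V1" "x1 \<noteq> y1"
    using multigraph1 assms(5,6) unfolding multigraph_def by (auto dest!: bspec[of _ _ d1])
  moreover have "\<sigma> x1 \<in> V2" "\<sigma> y1 \<in> V2" "\<sigma> x1 \<noteq> \<sigma> y1"
    using multigraph2 assms(7) ends_d2 unfolding multigraph_def by (auto dest!: bspec[of _ _ d2])
  ultimately have "inj_on ?g V2" and "V1 \<inter> ?g ` V2 \<subseteq> {x1, y1}"
    using assms(3) unfolding inj_on_def glue_map_def by auto
  then show ?thesis
    using assms ends_d2 \<open>\<sigma> x1 \<noteq> \<sigma> y1\<close>
    by unfold_locales (auto simp: sum_V_def sum_ends_def glue_map_def)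
qed

theorem mainTheorem9:
  fixes V1 V2 :: "'v set" and E1 E2 :: "'e set"
    and ends1 ends2 :: "'e \<Rightarrow> 'v set"
    and d1 d2 :: 'e and x1 y1 x2 y2 :: 'v and \<sigma> :: "'v \<Rightarrow> 'v"
  assumes "bispanning V1 E1 ends1" and "bispanning V2 E2 ends2"
    and "V1 \<inter> V2 = {}" and "E1 \<inter> E2 = {}"
    and "d1 \<in> E1" and "ends1 d1 = {x1, y1}"
    and "d2 \<in> E2" and "ends2 d2 = {x2, y2}"
    and "bij_betw \<sigma> {x1, y1} {x2, y2}"
  shows "bispanning (sum_V V1 V2 x1 y1 \<sigma>) (sum_E E1 E2 d1 d2)
           (sum_ends E1 ends1 ends2 x1 y1 \<sigma>)"
proof -
  have "multigraph V1 E1 ends1" "multigraph V2 E2 ends2"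
    using assms(1,2) unfolding bispanning_def by blast+
  from two_sum_clique_sum[OF this assms(3-9)]
  interpret two_sum V1 E1 ends1 d1 x1 y1 id V2 E2 ends2 d2 "\<sigma> x1" "\<sigma> y1" "glue_map x1 y1 \<sigma>"
    "sum_V V1 V2 x1 y1 \<sigma>" "sum_ends E1 ends1 ends2 x1 y1 \<sigma>" .
  from bispanning_sum[OF assms(1,2)] show ?thesis by (simp add: sum_E_def)
qed

end
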